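(* Let $\mathbf X\in\mathbb R^n$ be a random vector with $\|\mathbf X\|_\infty\le1$ and $\|\mathbf X\|_1\le s$ almost surely, with mean $\boldsymbol\mu^*$ and covariance matrix $\boldsymbol\Sigma^*$, and let $\nu^*_i=\mathbb E|X_i|$. Let $\mathcal A$ be a family of subsets of $[n]$ and $m=\max\{|A|:A\in\mathcal A\}$. Then for every $A\in\mathcal A$ and every $i\in[n]$, $$\sum_{j\in A}0\vee\Sigma^*_{ij}\le 2\nu^*_i(s\wedge m).$$
   Context: $\boldsymbol\Sigma^*=\mathbb E[(\mathbf X-\boldsymbol\mu^* )(\mathbf X-\boldsymbol\mu^* )^{\mathsf T}]$; $a\vee b=\max(a,b)$, $a\wedge b=\min(a,b)$. *)

theory Defs
  imports "HOL-Probability.Probability"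
begin

definition mean_vec :: "'a measure \<Rightarrow> ('a \<Rightarrow> real ^ 'n) \<Rightarrow> 'n \<Rightarrow> real" where
  "mean_vec M X i = (\<integral>\<omega>. X \<omega> $ i \<partial>M)"

definition cov_mat :: "'a measure \<Rightarrow> ('a \<Rightarrow> real ^ 'n) \<Rightarrow> 'n \<Rightarrow> 'n \<Rightarrow> real" where
  "cov_mat M X i j =
     (\<integral>\<omega>. (X \<omega> $ i - mean_vec M X i) * (X \<omega> $ j - mean_vec M X j) \<partial>M)"

definition abs_mean :: "'a measure \<Rightarrow> ('a \<Rightarrow> real ^ 'n) \<Rightarrow> 'n \<Rightarrow> real" where
  "abs_mean M X i = (\<integral>\<omega>. \<bar>X \<omega> $ i\<bar> \<partial>M)"

end

theory Submission
  imports Defs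
begin

text \<open>
  Since \<open>\<Sigma>\<^sub>i\<^sub>j = E[X\<^sub>i X\<^sub>j] - \<mu>\<^sub>i \<mu>\<^sub>j\<close>, the positive part of \<open>\<Sigma>\<^sub>i\<^sub>j\<close> is at most
  \<open>E[|X\<^sub>i| |X\<^sub>j|] + \<nu>\<^sub>i \<nu>\<^sub>j\<close>. Summing over \<open>j \<in> A\<close> with \<open>S = (\<Sum>j\<in>A. |X\<^sub>j|)\<close> bounds the
  left-hand side by \<open>E[|X\<^sub>i| S] + \<nu>\<^sub>i E[S]\<close>, and almost surely \<open>S \<le> min s (card A) \<le> min s m\<close>
  by the \<open>\<ell>\<^sub>1\<close> and \<open>\<ell>\<^sub>\<infinity>\<close> bounds on \<open>X\<close>.
\<close>

context prob_space
begin

lemma integral_centered_product: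
  fixes f g :: "'a \<Rightarrow> real"
  assumes f: "integrable M f" and g: "integrable M g"
    and fg: "integrable M (\<lambda>\<omega>. f \<omega> * g \<omega>)"
  shows "(\<integral>\<omega>. (f \<omega> - expectation f) * (g \<omega> - expectation g) \<partial>M)
           = expectation (\<lambda>\<omega>. f \<omega> * g \<omega>) - expectation f * expectation g"
proof -
  have "(\<lambda>\<omega>. (f \<omega> - expectation f) * (g \<omega> - expectation g)) =
        (\<lambda>\<omega>. (f \<omega> * g \<omega> - expectation g * f \<omega>) - (expectation f * g \<omega> - expectation f * expectation g))"
    by (auto simp: algebra_simps)
  then show ?thesis
    using f g fg by (simp add: prob_space)
qed

lemma integral_centered_product_le:
  fixes f g :: "'a \<Rightarrow> real"
  assumes f: "integrable M f" and g: "integrable M g"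
    and fg: "integrable M (\<lambda>\<omega>. f \<omega> * g \<omega>)"
  shows "(\<integral>\<omega>. (f \<omega> - expectation f) * (g \<omega> - expectation g) \<partial>M)
           \<le> expectation (\<lambda>\<omega>. \<bar>f \<omega>\<bar> * \<bar>g \<omega>\<bar>)
             + expectation (\<lambda>\<omega>. \<bar>f \<omega>\<bar>) * expectation (\<lambda>\<omega>. \<bar>g \<omega>\<bar>)"
proof -
  have "expectation (\<lambda>\<omega>. f \<omega> * g \<omega>) \<le> expectation (\<lambda>\<omega>. \<bar>f \<omega>\<bar> * \<bar>g \<omega>\<bar>)"
    using fg by (intro integral_mono) (auto simp: abs_mult[symmetric])
  moreover have "- (expectation f * expectation g) \<le> \<bar>expectation f\<bar> * \<bar>expectation g\<bar>"
    by (simp add: abs_mult[symmetric])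
  moreover have "\<bar>expectation f\<bar> * \<bar>expectation g\<bar>
                   \<le> expectation (\<lambda>\<omega>. \<bar>f \<omega>\<bar>) * expectation (\<lambda>\<omega>. \<bar>g \<omega>\<bar>)"
    by (intro mult_mono integral_abs_bound) auto
  ultimately show ?thesis
    using integral_centered_product[OF f g fg] by linarith
qed

lemma sum_pos_centered_product_le:
  fixes f :: "'i \<Rightarrow> 'a \<Rightarrow> real"
  assumes "finite A"
    and f: "\<And>k. integrable M (f k)"
    and fg: "\<And>j. j \<in> A \<Longrightarrow> integrable M (\<lambda>\<omega>. f i \<omega> * f j \<omega>)"
    and sum_le: "AE \<omega> in M. (\<Sum>j\<in>A. \<bar>f j \<omega>\<bar>) \<le> c"
  shows "(\<Sum>j\<in>A. max 0 (\<integral>\<omega>. (f i \<omega> - expectation (f i)) * (f j \<omega> - expectation (f j)) \<partial>M))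
           \<le> 2 * expectation (\<lambda>\<omega>. \<bar>f i \<omega>\<bar>) * c"
proof -
  define \<nu> where "\<nu> = expectation (\<lambda>\<omega>. \<bar>f i \<omega>\<bar>)"
  define S where "S = (\<lambda>\<omega>. \<Sum>j\<in>A. \<bar>f j \<omega>\<bar>)"
  have \<nu>_nonneg: "0 \<le> \<nu>"
    by (simp add: \<nu>_def)
  have abs_f: "integrable M (\<lambda>\<omega>. \<bar>f k \<omega>\<bar>)" for k
    using f by auto
  have abs_fg: "integrable M (\<lambda>\<omega>. \<bar>f i \<omega>\<bar> * \<bar>f j \<omega>\<bar>)" if "j \<in> A" for j
    using fg[OF that] by (simp add: abs_mult[symmetric])
  have "(\<Sum>j\<in>A. max 0 (\<integral>\<omega>. (f i \<omega> - expectation (f i)) * (f j \<omega> - expectation (f j)) \<partial>M))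
          \<le> (\<Sum>j\<in>A. expectation (\<lambda>\<omega>. \<bar>f i \<omega>\<bar> * \<bar>f j \<omega>\<bar>) + \<nu> * expectation (\<lambda>\<omega>. \<bar>f j \<omega>\<bar>))"
    using integral_centered_product_le[OF f f fg] \<nu>_nonneg
    by (intro sum_mono) (auto simp: \<nu>_def)
  also have "\<dots> = expectation (\<lambda>\<omega>. \<bar>f i \<omega>\<bar> * S \<omega>) + \<nu> * expectation S"
    using abs_f abs_fg \<open>finite A\<close>
    by (simp add: S_def sum.distrib sum_distrib_left integral_sum)
  also have "\<dots> \<le> expectation (\<lambda>\<omega>. \<bar>f i \<omega>\<bar> * c) + \<nu> * expectation (\<lambda>_. c)"
  proof (intro add_mono mult_left_mono \<nu>_nonneg integral_mono_AE)
    show "AE \<omega> in M. \<bar>f i \<omega>\<bar> * S \<omega> \<le> \<bar>f i \<omega>\<bar> * c"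
      using sum_le by eventually_elim (auto simp: S_def intro: mult_left_mono)
  qed (use sum_le abs_f abs_fg in \<open>auto simp: S_def sum_distrib_left\<close>)
  also have "\<dots> = 2 * \<nu> * c"
    by (simp add: \<nu>_def prob_space)
  finally show ?thesis
    by (simp add: \<nu>_def)
qed

end

lemma integrable_vec_nth_bounded:
  fixes X :: "'a \<Rightarrow> real ^ 'n"
  assumes "finite_measure M" and "X \<in> borel_measurable M"
    and "AE \<omega> in M. \<bar>X \<omega> $ k\<bar> \<le> B"
  shows "integrable M (\<lambda>\<omega>. X \<omega> $ k)"
  using assms measurable_compose[OF assms(2) borel_measurable_nth]
  by (intro finite_measure.integrable_const_bound[where B = B]) auto

theorem lemma1:
  fixes M :: "'a measure" and X :: "'a \<Rightarrow> real ^ 'n" and s :: real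
    and \<A> :: "'n set set" and A :: "'n set" and i :: 'n
  assumes "prob_space M"
    and "X \<in> borel_measurable M"
    and "AE \<omega> in M. \<forall>k. \<bar>X \<omega> $ k\<bar> \<le> 1"
    and "AE \<omega> in M. (\<Sum>k\<in>UNIV. \<bar>X \<omega> $ k\<bar>) \<le> s"
    and "A \<in> \<A>"
  shows "(\<Sum>j\<in>A. max 0 (cov_mat M X i j))
           \<le> 2 * abs_mean M X i * min s (real (Max (card ` \<A>)))"
proof -
  interpret prob_space M by fact
  have bounded: "AE \<omega> in M. \<bar>X \<omega> $ k\<bar> \<le> 1" for k
    using assms(3) by eventually_elim auto
  have integrable: "integrable M (\<lambda>\<omega>. X \<omega> $ k)" for k
    using integrable_vec_nth_bounded[OF finite_measure_axioms assms(2) bounded] .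
  have integrable_product: "integrable M (\<lambda>\<omega>. X \<omega> $ i * X \<omega> $ j)" for j
  proof (rule integrable_const_bound[where B = 1])
    show "AE \<omega> in M. norm (X \<omega> $ i * X \<omega> $ j) \<le> 1"
      using assms(3) by eventually_elim (auto simp: abs_mult intro: mult_le_one)
  qed (use integrable in auto)
  have card_le: "card A \<le> Max (card ` \<A>)"
    using assms(5) by (intro Max_ge) auto
  have "AE \<omega> in M. (\<Sum>j\<in>A. \<bar>X \<omega> $ j\<bar>) \<le> min s (real (Max (card ` \<A>)))"
    using assms(3,4)
  proof eventually_elim
    case (elim \<omega>)
    have "(\<Sum>j\<in>A. \<bar>X \<omega> $ j\<bar>) \<le> (\<Sum>k\<in>UNIV. \<bar>X \<omega> $ k\<bar>)"
      by (intro sum_mono2) auto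
    moreover have "(\<Sum>j\<in>A. \<bar>X \<omega> $ j\<bar>) \<le> card A"
      using sum_mono[of A "\<lambda>j. \<bar>X \<omega> $ j\<bar>" "\<lambda>_. 1"] elim(1) by auto
    ultimately show ?case
      using elim card_le by linarith
  qed
  from sum_pos_centered_product_le[OF _ integrable integrable_product this]
  show ?thesis
    by (simp add: cov_mat_def mean_vec_def abs_mean_def)
qed

end
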